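(* Let $P$ be a finite poset, $\epsilon\in\{1,-1\}$ and $y_0,x_1,\ldots,y_{t-1},x_t$ a $q^{(\epsilon)}$-reduced sequence of elements of $P$ satisfying condition N'. Put $x_0=-\infty$, $y_t=\infty$. Then there exists $\xi\in S^{(\epsilon)}$ such that $T^\xi$ is a generator of $\omega^{(\epsilon)}$ and $\deg T^\xi=q^{(\epsilon)}(x_0,y_0,\ldots,x_t,y_t)$.
   Context: $P^\pm=P\cup\{-\infty,\infty\}$, $-\infty<z<\infty$ for $z\in P$; $P^-=P\cup\{-\infty\}$; $\xi^+(B)=\sum_{b\in B}\xi(b)$. Saturated chain: $x=z_0\lessdot\cdots\lessdot z_t=y$, length $t$. $q^{(\epsilon)}\mathrm{dist}(x,y)=\max\{\epsilon t:$ saturated chain of length $t$ from $x$ to $y$ in $P^\pm\}$. For $w_0<z_0>w_1<\cdots>w_s<z_s$ in $P^\pm$, $q^{(\epsilon)}(w_0,z_0,\ldots,w_s,z_s)=\sum_{\ell=0}^s q^{(\epsilon)}\mathrm{dist}(w_\ell,z_\ell)-\sum_{\ell=0}^{s-1}q^{(\epsilon)}\mathrm{dist}(w_{\ell+1},z_\ell)$. Condition N': $y_0>x_1<y_1>\cdots<y_{t-1}>x_t$ in $P$ and $y_i\not>x_j$ whenever $i\le j-2$ (empty sequence allowed). $q^{(\epsilon)}$-reduced: with $x_0=-\infty,y_t=\infty$, $q^{(\epsilon)}\mathrm{dist}(x_i,y_j)<q^{(\epsilon)}(x_i,y_i,\ldots,x_j,y_j)$ whenever $0\le i<j\le t$ and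 $x_i<y_j$. $S^{(m)}=\{\xi\in\mathbb Z^{P^-}:\xi(x)\ge m\ \forall x\in P,\ \xi(-\infty)\ge\xi^+(C)+m$ for all maximal chains $C\}$. $R=\mathbb K[\mathcal C(P)]=\bigoplus_{S^{(0)}}\mathbb KT^\xi$ (Ehrhart ring of the chain polytope; $T^\xi=\prod T_x^{\xi(x)}$, $\deg T^\xi=\xi(-\infty)$), $\omega^{(1)}=\omega=\bigoplus_{S^{(1)}}\mathbb KT^\xi$, $\omega^{(-1)}=R:\omega=\bigoplus_{S^{(-1)}}\mathbb KT^\xi$. A generator of $\omega^{(\epsilon)}$ is a monomial $T^\xi$, $\xi\in S^{(\epsilon)}$, not of the form $T^{\xi_1}T^{\xi_2}$ with $\xi_1\in S^{(0)}$, $\xi_1(-\infty)>0$, $\xi_2\in S^{(\epsilon)}$. *)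

theory Defs
  imports Main
begin

datatype 'a ext = NegInf | Fin 'a | PosInf

fun eless :: "'a::order ext \<Rightarrow> 'a ext \<Rightarrow> bool" where
  "eless NegInf NegInf = False"
| "eless NegInf _ = True"
| "eless (Fin a) (Fin b) = (a < b)"
| "eless (Fin a) PosInf = True"
| "eless (Fin a) NegInf = False"
| "eless PosInf _ = False"

definition Pext :: "'a set \<Rightarrow> 'a ext set" where
  "Pext P = {NegInf, PosInf} \<union> Fin ` P"

definition Pminus :: "'a set \<Rightarrow> 'a ext set" where
  "Pminus P = {NegInf} \<union> Fin ` P"

definition covers :: "'a::order set \<Rightarrow> 'a ext \<Rightarrow> 'a ext \<Rightarrow> bool" where
  "covers P a b \<longleftrightarrow> a \<in> Pext P \<and> b \<in> Pext P \<and> eless a b \<and>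
     \<not> (\<exists>c\<in>Pext P. eless a c \<and> eless c b)"

definition satchain :: "'a::order set \<Rightarrow> 'a ext \<Rightarrow> 'a ext \<Rightarrow> nat \<Rightarrow> bool" where
  "satchain P a b t \<longleftrightarrow> (\<exists>zs. length zs = Suc t \<and> zs ! 0 = a \<and> zs ! t = b \<and>
     (\<forall>i<t. covers P (zs ! i) (zs ! Suc i)))"

definition qdist :: "'a::order set \<Rightarrow> int \<Rightarrow> 'a ext \<Rightarrow> 'a ext \<Rightarrow> int" where
  "qdist P eps a b = Max {eps * int t | t. satchain P a b t}"

definition qseq :: "'a::order set \<Rightarrow> int \<Rightarrow> (nat \<Rightarrow> 'a ext) \<Rightarrow> (nat \<Rightarrow> 'a ext) \<Rightarrow> nat \<Rightarrow> nat \<Rightarrow> int" where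
  "qseq P eps w z i j = (\<Sum>l=i..j. qdist P eps (w l) (z l)) - (\<Sum>l=i..<j. qdist P eps (w (Suc l)) (z l))"

definition Xs :: "(nat \<Rightarrow> 'a) \<Rightarrow> nat \<Rightarrow> 'a ext" where
  "Xs x i = (if i = 0 then NegInf else Fin (x i))"

definition Ys :: "nat \<Rightarrow> (nat \<Rightarrow> 'a) \<Rightarrow> nat \<Rightarrow> 'a ext" where
  "Ys t y j = (if j = t then PosInf else Fin (y j))"

definition condN' :: "'a::order set \<Rightarrow> nat \<Rightarrow> (nat \<Rightarrow> 'a) \<Rightarrow> (nat \<Rightarrow> 'a) \<Rightarrow> bool" where
  "condN' P t x y \<longleftrightarrow>
     (\<forall>i\<in>{1..t}. x i \<in> P) \<and> (\<forall>i<t. y i \<in> P) \<and>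
     (\<forall>i<t. x (Suc i) < y i) \<and>
     (\<forall>i. 1 \<le> i \<and> i < t \<longrightarrow> x i < y i) \<and>
     (\<forall>i j. i + 2 \<le> j \<and> j \<le> t \<longrightarrow> \<not> (x j < y i))"

definition q_reduced :: "'a::order set \<Rightarrow> int \<Rightarrow> nat \<Rightarrow> (nat \<Rightarrow> 'a) \<Rightarrow> (nat \<Rightarrow> 'a) \<Rightarrow> bool" where
  "q_reduced P eps t x y \<longleftrightarrow>
     (\<forall>i j. i < j \<and> j \<le> t \<and> eless (Xs x i) (Ys t y j) \<longrightarrow>
        qdist P eps (Xs x i) (Ys t y j) < qseq P eps (Xs x) (Ys t y) i j)"

definition is_chain :: "'a::order set \<Rightarrow> 'a set \<Rightarrow> bool" where
  "is_chain P C \<longleftrightarrow> C \<subseteq> P \<and> (\<forall>a\<in>C. \<forall>b\<in>C. a \<le> b \<or> b \<le> a)"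

definition maximal_chain :: "'a::order set \<Rightarrow> 'a set \<Rightarrow> bool" where
  "maximal_chain P C \<longleftrightarrow> is_chain P C \<and> (\<forall>D. is_chain P D \<and> C \<subseteq> D \<longrightarrow> D = C)"

text \<open>S^(m): exponent vectors xi in Z^(P^-), encoded as functions vanishing outside P^-.\<close>
definition S :: "'a::order set \<Rightarrow> int \<Rightarrow> ('a ext \<Rightarrow> int) set" where
  "S P m = {\<xi>. (\<forall>a. a \<notin> Pminus P \<longrightarrow> \<xi> a = 0) \<and>
              (\<forall>x\<in>P. \<xi> (Fin x) \<ge> m) \<and>
              (\<forall>C. maximal_chain P C \<longrightarrow> \<xi> NegInf \<ge> (\<Sum>x\<in>C. \<xi> (Fin x)) + m)}"

text \<open>T^xi is a generator of omega^(eps); T^xi1 T^xi2 = T^(xi1+xi2), deg T^xi = xi(-infinity).\<close>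
definition is_generator :: "'a::order set \<Rightarrow> int \<Rightarrow> ('a ext \<Rightarrow> int) \<Rightarrow> bool" where
  "is_generator P eps \<xi> \<longleftrightarrow> \<xi> \<in> S P eps \<and>
     \<not> (\<exists>\<xi>1 \<xi>2. \<xi>1 \<in> S P 0 \<and> \<xi>1 NegInf > 0 \<and> \<xi>2 \<in> S P eps \<and> \<xi> = (\<lambda>a. \<xi>1 a + \<xi>2 a))"

end

theory Submission
  imports Defs
begin

text \<open>
  The generator is written down explicitly. Let \<open>after m\<close> be the part of
  \<open>q(x\<^sub>0, y\<^sub>0, \<dots>, x\<^sub>t, y\<^sub>t)\<close> beyond \<open>y\<^sub>m\<close> and
  \<open>before l\<close> the part before \<open>x\<^sub>l\<close>. Put \<open>up z\<close> = max of
  \<open>after m + dist(z, y\<^sub>m)\<close> over all \<open>y\<^sub>m \<ge> z\<close>, and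
  \<open>down z = q - \<epsilon> - max {up w | w covers z}\<close>. Giving each \<open>v \<in> P\<close> the larger
  of the drops \<open>up v - max {up w | w covers v}\<close> and \<open>down v - max {down u | v covers u}\<close>
  defines \<open>\<xi>\<close> with \<open>\<xi>(-\<infinity>) = q\<close>; along a saturated chain these drops telescope,
  so \<open>\<xi> \<in> S\<^sup>(\<^sup>\<epsilon>\<^sup>)\<close>. Reducedness and N' give \<open>before l \<le> down x\<^sub>l\<close> and
  \<open>after l \<le> up y\<^sub>l\<close>, so a maximal chain \<open>C\<^sub>l\<close> through an optimal chain from
  \<open>x\<^sub>l\<close> to \<open>y\<^sub>l\<close> carries \<open>\<xi>\<close>-weight \<open>q - \<epsilon>\<close>. If \<open>\<xi> = \<xi>\<^sub>1 + \<xi>\<^sub>2\<close> with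
  \<open>\<xi>\<^sub>1 \<in> S\<^sup>(\<^sup>0\<^sup>)\<close>, comparing with \<open>\<xi>\<^sub>2\<close> on \<open>C\<^sub>l\<close> bounds \<open>\<xi>\<^sub>1(-\<infinity>)\<close> by the
  \<open>\<xi>\<^sub>1\<close>-weight of the parts of \<open>C\<^sub>l\<close> below \<open>x\<^sub>l\<close> and above \<open>y\<^sub>l\<close>, while splicing
  the part below \<open>x\<^sub>l\<^sub>+\<^sub>1\<close> with the part above \<open>y\<^sub>l\<close> (possible as
  \<open>x\<^sub>l\<^sub>+\<^sub>1 < y\<^sub>l\<close>) bounds these sums by \<open>\<xi>\<^sub>1(-\<infinity>)\<close>. Summing over \<open>l\<close>
  telescopes to \<open>\<xi>\<^sub>1(-\<infinity>) \<le> 0\<close>.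
\<close>

instantiation ext :: (order) order
begin

definition less_ext :: "'a ext \<Rightarrow> 'a ext \<Rightarrow> bool" where
  "less_ext = eless"

definition less_eq_ext :: "'a ext \<Rightarrow> 'a ext \<Rightarrow> bool" where
  "less_eq_ext a b \<longleftrightarrow> a = b \<or> eless a b"

lemma eless_trans: "eless a b \<Longrightarrow> eless b c \<Longrightarrow> eless a c"
  by (cases a; cases b; cases c) auto

lemma eless_irrefl: "\<not> eless a a"
  by (cases a) auto

instance
proof
  fix a b c :: "'a ext"
  show "a < b \<longleftrightarrow> a \<le> b \<and> \<not> b \<le> a"
    unfolding less_ext_def less_eq_ext_def using eless_trans eless_irrefl by blast
  show "a \<le> a"
    by (simp add: less_eq_ext_def)
  show "a \<le> b \<Longrightarrow> b \<le> c \<Longrightarrow> a \<le> c"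
    unfolding less_eq_ext_def using eless_trans by blast
  show "a \<le> b \<Longrightarrow> b \<le> a \<Longrightarrow> a = b"
    unfolding less_eq_ext_def using eless_trans eless_irrefl by blast
qed

end

lemma eless_iff_less [simp]: "eless a b \<longleftrightarrow> a < b"
  by (simp add: less_ext_def)

lemma ext_less_simps [simp]:
  "Fin u < Fin v \<longleftrightarrow> u < v"
  "NegInf < a \<longleftrightarrow> a \<noteq> NegInf"
  "a < PosInf \<longleftrightarrow> a \<noteq> PosInf"
  "\<not> a < NegInf"
  "\<not> PosInf < a"
  by (cases a; simp add: less_ext_def del: eless_iff_less)+

lemma ext_le_simps [simp]: "NegInf \<le> a" "a \<le> PosInf" "Fin u \<le> Fin v \<longleftrightarrow> u \<le> v"
  by (cases a; auto simp: less_eq_ext_def order.order_iff_strict del: eless_iff_less)+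

lemma finite_Pext: "finite P \<Longrightarrow> finite (Pext P)"
  by (simp add: Pext_def)

lemma Pext_simps [simp]: "NegInf \<in> Pext P" "PosInf \<in> Pext P" "Fin v \<in> Pext P \<longleftrightarrow> v \<in> P"
  by (auto simp: Pext_def)

lemma covers_iff:
  "covers P a b \<longleftrightarrow> a \<in> Pext P \<and> b \<in> Pext P \<and> a < b \<and> \<not> (\<exists>c\<in>Pext P. a < c \<and> c < b)"
  by (simp add: covers_def)

lemma coversD: assumes "covers P a b" shows "a \<in> Pext P" "b \<in> Pext P" "a < b"
  using assms by (simp_all add: covers_iff)

lemma cover_above:
  assumes "finite P" "a \<in> Pext P" "b \<in> Pext P" "a < b"
  obtains w where "covers P a w" "w \<le> b"
proof -
  let ?Z = "{w\<in>Pext P. a < w \<and> w \<le> b}"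
  obtain m where m: "m \<in> ?Z" "\<forall>w\<in>?Z. w \<le> m \<longrightarrow> m = w"
    using finite_has_minimal[of ?Z] finite_Pext[OF assms(1)] assms by fastforce
  then have "covers P a m"
    unfolding covers_iff using assms(2) by (auto dest: order.strict_implies_order)
  with m show thesis using that by blast
qed

lemma cover_below:
  assumes "finite P" "a \<in> Pext P" "b \<in> Pext P" "a < b"
  obtains u where "covers P u b" "a \<le> u"
proof -
  let ?Z = "{u\<in>Pext P. u < b \<and> a \<le> u}"
  obtain m where m: "m \<in> ?Z" "\<forall>u\<in>?Z. m \<le> u \<longrightarrow> m = u"
    using finite_has_maximal[of ?Z] finite_Pext[OF assms(1)] assms by fastforce
  then have "covers P m b"
    unfolding covers_iff using assms(3) by (auto dest: order.strict_implies_order)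
  with m show thesis using that by blast
qed

lemma Pext_up_induct [consumes 1, case_names step]:
  assumes "finite P" and step: "\<And>z. (\<And>w. w \<in> Pext P \<Longrightarrow> z < w \<Longrightarrow> Q w) \<Longrightarrow> Q z"
  shows "Q z"
proof (induction "card {w \<in> Pext P. z < w}" arbitrary: z rule: less_induct)
  case less
  show ?case
  proof (rule step)
    fix w assume w: "w \<in> Pext P" "z < w"
    then have "{u \<in> Pext P. w < u} \<subset> {u \<in> Pext P. z < u}"
      by auto
    then have "card {u \<in> Pext P. w < u} < card {u \<in> Pext P. z < u}"
      using finite_Pext[OF assms(1)] by (simp add: psubset_card_mono)
    then show "Q w" using less by blast
  qed
qed

lemma Pext_down_induct [consumes 1, case_names step]:
  assumes "finite P" and step: "\<And>z. (\<And>u. u \<in> Pext P \<Longrightarrow> u < z \<Longrightarrow> Q u) \<Longrightarrow> Q z"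
  shows "Q z"
proof (induction "card {u \<in> Pext P. u < z}" arbitrary: z rule: less_induct)
  case less
  show ?case
  proof (rule step)
    fix u assume u: "u \<in> Pext P" "u < z"
    then have "{w \<in> Pext P. w < u} \<subset> {w \<in> Pext P. w < z}"
      by auto
    then have "card {w \<in> Pext P. w < u} < card {w \<in> Pext P. w < z}"
      using finite_Pext[OF assms(1)] by (simp add: psubset_card_mono)
    then show "Q u" using less by blast
  qed
qed

definition sat_chain :: "'a::order set \<Rightarrow> 'a ext list \<Rightarrow> bool" where
  "sat_chain P zs \<longleftrightarrow> zs \<noteq> [] \<and> set zs \<subseteq> Pext P \<and> successively (covers P) zs"

lemma sat_chain_strict_sorted: "sat_chain P zs \<Longrightarrow> sorted_wrt (<) zs"
proof -
  assume "sat_chain P zs"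
  then have "successively (<) zs"
    unfolding sat_chain_def by (auto intro: successively_mono dest: coversD(3))
  then show ?thesis
    by (simp add: successively_conv_sorted_wrt transp_on_less)
qed

lemma sat_chain_hd_le_last:
  assumes "sat_chain P zs"
  shows "hd zs \<le> last zs"
proof -
  have "sorted_wrt (<) zs" "zs \<noteq> []"
    using assms sat_chain_strict_sorted by (auto simp: sat_chain_def)
  then show ?thesis
    by (cases zs) (auto intro: less_imp_le)
qed

lemma sat_chain_singleton:
  assumes "sat_chain P zs" "hd zs = last zs"
  shows "zs = [hd zs]"
proof -
  have "sorted_wrt (<) zs" "zs \<noteq> []"
    using assms(1) sat_chain_strict_sorted by (auto simp: sat_chain_def)
  with assms(2) show ?thesis
    by (cases zs) (auto split: if_splits)
qed

lemma sat_chain_Cons: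
  "sat_chain P (a # zs) \<longleftrightarrow> a \<in> Pext P \<and> (zs = [] \<or> covers P a (hd zs) \<and> sat_chain P zs)"
  by (cases zs) (auto simp: sat_chain_def)

lemma sat_chain_snoc:
  "sat_chain P (zs @ [a]) \<longleftrightarrow> a \<in> Pext P \<and> (zs = [] \<or> covers P (last zs) a \<and> sat_chain P zs)"
  by (cases zs rule: rev_cases) (auto simp: sat_chain_def successively_append_iff)

lemma sat_chain_join:
  assumes "sat_chain P xs" "sat_chain P ys" "last xs = hd ys"
  shows "sat_chain P (xs @ tl ys)"
  using assms by (cases ys; cases "tl ys")
    (auto simp: sat_chain_def successively_append_iff successively_Cons)

lemma strict_sorted_distinct: "sorted_wrt (<) (zs :: 'a::order list) \<Longrightarrow> distinct zs"
  by (induction zs) auto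

lemma strict_sorted_comparable:
  "sorted_wrt (<) (zs :: 'a::order list) \<Longrightarrow> z \<in> set zs \<Longrightarrow> z' \<in> set zs \<Longrightarrow> z \<le> z' \<or> z' \<le> z"
  by (induction zs) (auto intro: less_imp_le)

lemma sat_chain_distinct: "sat_chain P zs \<Longrightarrow> distinct zs"
  by (rule strict_sorted_distinct[OF sat_chain_strict_sorted])

lemma sat_chain_length_le:
  assumes "finite P" "sat_chain P zs"
  shows "length zs \<le> card (Pext P)"
proof -
  have "distinct zs"
    using assms(2) by (rule sat_chain_distinct)
  then have "length zs = card (set zs)"
    by (simp add: distinct_card)
  also have "\<dots> \<le> card (Pext P)"
    using assms by (intro card_mono) (auto simp: finite_Pext sat_chain_def)
  finally show ?thesis .
qed

lemma sat_chain_exists: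
  assumes "finite P" "a \<in> Pext P" "b \<in> Pext P" "a \<le> b"
  shows "\<exists>zs. sat_chain P zs \<and> hd zs = a \<and> last zs = b"
  using assms(1,2,4)
proof (induction a rule: Pext_up_induct)
  case (step a)
  show ?case
  proof (cases "a = b")
    case True
    with step.prems show ?thesis
      by (intro exI[of _ "[a]"]) (simp add: sat_chain_def)
  next
    case False
    with step.prems(2) have "a < b"
      by simp
    then obtain w where w: "covers P a w" "w \<le> b"
      using cover_above[OF assms(1) step.prems(1) assms(3)] by blast
    then obtain zs where zs: "sat_chain P zs" "hd zs = w" "last zs = b"
      using step.IH coversD by blast
    then have "sat_chain P (a # zs)"
      using w(1) step.prems(1) by (simp add: sat_chain_Cons)
    with zs show ?thesis
      by (intro exI[of _ "a # zs"]) (simp add: sat_chain_def)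
  qed
qed

lemma satchain_iff_sat_chain:
  assumes "a \<in> Pext P"
  shows "satchain P a b k \<longleftrightarrow> (\<exists>zs. sat_chain P zs \<and> length zs = Suc k \<and> hd zs = a \<and> last zs = b)"
proof
  assume "satchain P a b k"
  then obtain zs where zs: "length zs = Suc k" "zs ! 0 = a" "zs ! k = b"
    "\<forall>i<k. covers P (zs ! i) (zs ! Suc i)"
    unfolding satchain_def by blast
  have "zs ! i \<in> Pext P" if "i < length zs" for i
    using that zs assms coversD(2)[of P "zs ! (i - 1)" "zs ! i"] by (cases i) auto
  then have "sat_chain P zs"
    using zs(1,4) by (auto simp: sat_chain_def successively_conv_nth in_set_conv_nth)
  moreover have "hd zs = a" "last zs = b"
    using zs(1-3) by (simp_all add: hd_conv_nth last_conv_nth flip: length_greater_0_conv)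
  ultimately show "\<exists>zs. sat_chain P zs \<and> length zs = Suc k \<and> hd zs = a \<and> last zs = b"
    using zs(1) by blast
next
  assume "\<exists>zs. sat_chain P zs \<and> length zs = Suc k \<and> hd zs = a \<and> last zs = b"
  then show "satchain P a b k"
    unfolding satchain_def sat_chain_def
    by (auto simp: successively_conv_nth hd_conv_nth last_conv_nth)
qed

lemma qdist_ge_sat_chain:
  assumes "finite P" "sat_chain P zs"
  shows "eps * int (length zs - 1) \<le> qdist P eps (hd zs) (last zs)"
proof -
  have hd: "hd zs \<in> Pext P"
    using assms(2) by (auto simp: sat_chain_def)
  have "{k. satchain P (hd zs) (last zs) k} \<subseteq> {..card (Pext P)}"
    using sat_chain_length_le[OF assms(1)] by (fastforce simp: satchain_iff_sat_chain[OF hd])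
  then have "finite {eps * int k | k. satchain P (hd zs) (last zs) k}"
    by (simp add: finite_subset image_Collect[symmetric])
  moreover have "satchain P (hd zs) (last zs) (length zs - 1)"
    using assms(2) by (auto simp: satchain_iff_sat_chain[OF hd] sat_chain_def)
  ultimately show ?thesis
    unfolding qdist_def by (blast intro: Max_ge)
qed

lemma qdist_attained:
  assumes "finite P" "a \<in> Pext P" "b \<in> Pext P" "a \<le> b"
  obtains zs where "sat_chain P zs" "hd zs = a" "last zs = b"
    "qdist P eps a b = eps * int (length zs - 1)"
proof -
  have "{k. satchain P a b k} \<subseteq> {..card (Pext P)}"
    using sat_chain_length_le[OF assms(1)] by (fastforce simp: satchain_iff_sat_chain[OF assms(2)])
  then have "finite {eps * int k | k. satchain P a b k}"
    by (simp add: finite_subset image_Collect[symmetric])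
  moreover obtain zs where "sat_chain P zs" "hd zs = a" "last zs = b"
    using sat_chain_exists[OF assms] by blast
  then have "satchain P a b (length zs - 1)"
    by (auto simp: satchain_iff_sat_chain[OF assms(2)] sat_chain_def)
  ultimately have "qdist P eps a b \<in> {eps * int k | k. satchain P a b k}"
    unfolding qdist_def by (intro Max_in) auto
  then obtain k where "satchain P a b k" "qdist P eps a b = eps * int k"
    by blast
  then show thesis
    using that by (fastforce simp: satchain_iff_sat_chain[OF assms(2)])
qed

lemma qdist_refl:
  assumes "finite P" "a \<in> Pext P"
  shows "qdist P eps a a = 0"
proof -
  obtain zs where zs: "sat_chain P zs" "hd zs = a" "last zs = a"
    "qdist P eps a a = eps * int (length zs - 1)"
    using qdist_attained[OF assms assms(2)] by blast
  then have "zs = [a]"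
    using sat_chain_singleton[OF zs(1)] by simp
  with zs(4) show ?thesis
    by simp
qed

lemma sat_chain_of_cover:
  assumes "sat_chain P zs" "covers P (hd zs) (last zs)"
  shows "zs = [hd zs, last zs]"
proof -
  obtain a rest where zs: "zs = a # rest"
    using assms(1) by (cases zs) (auto simp: sat_chain_def)
  have sorted: "sorted_wrt (<) zs" and "set zs \<subseteq> Pext P"
    using assms(1) sat_chain_strict_sorted by (auto simp: sat_chain_def)
  moreover have "rest \<noteq> []"
    using assms(2) zs by (auto dest: coversD(3))
  ultimately obtain c r where "rest = c # r" "c \<in> Pext P" "a < c"
    using zs by (cases rest) auto
  moreover have "r = []"
  proof (rule ccontr)
    assume "r \<noteq> []"
    then have "c < last zs"
      using sorted \<open>rest = c # r\<close> zs by simp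
    with \<open>c \<in> Pext P\<close> \<open>a < c\<close> assms(2) zs show False
      by (auto simp: covers_iff)
  qed
  ultimately show ?thesis
    using zs by simp
qed

lemma qdist_cover:
  assumes "finite P" "covers P a b"
  shows "qdist P eps a b = eps"
proof -
  obtain zs where zs: "sat_chain P zs" "hd zs = a" "last zs = b"
    "qdist P eps a b = eps * int (length zs - 1)"
    using qdist_attained[OF assms(1) coversD(1,2)[OF assms(2)]] coversD(3)[OF assms(2)]
    by (blast intro: less_imp_le)
  then have "zs = [a, b]"
    using sat_chain_of_cover[OF zs(1)] assms(2) by simp
  with zs(4) show ?thesis
    by simp
qed

lemma qdist_superadditive:
  assumes "finite P" "a \<in> Pext P" "b \<in> Pext P" "c \<in> Pext P" "a \<le> b" "b \<le> c"
  shows "qdist P eps a b + qdist P eps b c \<le> qdist P eps a c"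
proof -
  obtain xs where xs: "sat_chain P xs" "hd xs = a" "last xs = b"
    "qdist P eps a b = eps * int (length xs - 1)"
    using qdist_attained[OF assms(1,2,3,5)] by blast
  obtain ys where ys: "sat_chain P ys" "hd ys = b" "last ys = c"
    "qdist P eps b c = eps * int (length ys - 1)"
    using qdist_attained[OF assms(1,3,4,6)] by blast
  have ne: "xs \<noteq> []" "ys \<noteq> []"
    using xs(1) ys(1) by (auto simp: sat_chain_def)
  have "eps * int (length (xs @ tl ys) - 1) \<le> qdist P eps (hd (xs @ tl ys)) (last (xs @ tl ys))"
    using qdist_ge_sat_chain[OF assms(1) sat_chain_join[OF xs(1) ys(1)]] xs(3) ys(2) by simp
  moreover have "hd (xs @ tl ys) = a"
    using xs(2) ne(1) by simp
  moreover have "last (xs @ tl ys) = c"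
    using xs(3) ys(2,3) ne(2) by (cases ys) auto
  moreover have "length (xs @ tl ys) - 1 = (length xs - 1) + (length ys - 1)"
    using ne by (cases xs; cases ys) auto
  ultimately show ?thesis
    using xs(4) ys(4) by (simp add: algebra_simps)
qed

lemma qdist_first_cover:
  assumes "finite P" "a \<in> Pext P" "b \<in> Pext P" "a < b"
  obtains w where "covers P a w" "w \<le> b" "qdist P eps a b = eps + qdist P eps w b"
proof -
  obtain zs where zs: "sat_chain P zs" "hd zs = a" "last zs = b"
    "qdist P eps a b = eps * int (length zs - 1)"
    using qdist_attained[OF assms(1-3)] assms(4) by (blast intro: less_imp_le)
  obtain w ws where zs_eq: "zs = a # w # ws"
    using zs(1-3) assms(4) by (cases zs; cases "tl zs") (auto simp: sat_chain_def)
  have w: "covers P a w" "sat_chain P (w # ws)"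
    using zs(1) zs_eq by (auto simp: sat_chain_Cons)
  have last: "last (w # ws) = b"
    using zs(3) zs_eq by simp
  have wb: "w \<le> b"
    using sat_chain_hd_le_last[OF w(2)] last by simp
  have "qdist P eps a b \<le> eps + qdist P eps w b"
    using qdist_ge_sat_chain[OF assms(1) w(2)] zs(4) zs_eq last by (simp add: algebra_simps)
  moreover have "eps + qdist P eps w b \<le> qdist P eps a b"
    using qdist_superadditive[OF assms(1,2) coversD(2)[OF w(1)] assms(3)] wb
      coversD(3)[OF w(1)] qdist_cover[OF assms(1) w(1)] by fastforce
  ultimately show thesis
    using that w(1) wb by simp
qed

lemma optimal_segment:
  assumes "finite P" "a \<in> Pext P" "b \<in> Pext P" "a < b"
  obtains ms where "sat_chain P (a # ms @ [b])" "set ms \<subseteq> Fin ` P"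
    "qdist P eps a b = eps * int (length ms) + eps"
proof -
  obtain zs where zs: "sat_chain P zs" "hd zs = a" "last zs = b"
    "qdist P eps a b = eps * int (length zs - 1)"
    using qdist_attained[OF assms(1-3)] assms(4) by (blast intro: less_imp_le)
  obtain ms where zs_eq: "zs = a # ms @ [b]"
    using zs(1-3) assms(4)
    by (cases zs; cases "tl zs" rule: rev_cases) (auto simp: sat_chain_def)
  have "m \<in> Fin ` P" if "m \<in> set ms" for m
  proof -
    have "a < m" "m < b" "m \<in> Pext P"
      using zs(1) sat_chain_strict_sorted[OF zs(1)] that
      by (auto simp: zs_eq sorted_wrt_append sat_chain_def)
    then show ?thesis
      by (cases m) auto
  qed
  then show thesis
    using that zs zs_eq by (auto simp: algebra_simps)
qed

definition weight :: "('a ext \<Rightarrow> int) \<Rightarrow> 'a ext list \<Rightarrow> int" where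
  "weight f zs = (\<Sum>z\<leftarrow>zs. case z of Fin _ \<Rightarrow> f z | _ \<Rightarrow> 0)"

lemma weight_simps [simp]:
  "weight f [] = 0"
  "weight f (NegInf # zs) = weight f zs"
  "weight f (PosInf # zs) = weight f zs"
  "weight f (Fin v # zs) = f (Fin v) + weight f zs"
  "weight f (xs @ ys) = weight f xs + weight f ys"
  by (simp_all add: weight_def)

lemma weight_add: "weight (\<lambda>a. f a + g a) zs = weight f zs + weight g zs"
  by (induction zs) (auto simp: weight_def split: ext.split)

lemma weight_lower_bound:
  assumes "set ms \<subseteq> Fin ` P" "\<And>v. v \<in> P \<Longrightarrow> c \<le> f (Fin v)"
  shows "c * int (length ms) \<le> weight f ms"
  using assms(1)
proof (induction ms)
  case (Cons m ms)
  then obtain v where "m = Fin v" "v \<in> P"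
    by auto
  with Cons assms(2)[of v] show ?case
    by (simp add: algebra_simps)
qed simp

lemma sum_Fin_eq_weight:
  assumes "distinct zs"
  shows "(\<Sum>v | Fin v \<in> set zs. f (Fin v)) = weight f zs"
proof -
  have "(\<Sum>v | Fin v \<in> set zs. f (Fin v)) = (\<Sum>z\<in>Fin ` {v. Fin v \<in> set zs}. f z)"
    by (simp add: sum.reindex inj_on_def)
  also have "\<dots> = (\<Sum>z\<in>set zs. case z of Fin _ \<Rightarrow> f z | _ \<Rightarrow> 0)"
    by (rule sum.mono_neutral_cong_left) (auto split: ext.split)
  also have "\<dots> = weight f zs"
    using assms by (simp add: weight_def sum_list_distinct_conv_sum_set)
  finally show ?thesis .
qed

definition spanning_chain :: "'a::order set \<Rightarrow> 'a ext list \<Rightarrow> bool" where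
  "spanning_chain P zs \<longleftrightarrow> sat_chain P zs \<and> hd zs = NegInf \<and> last zs = PosInf"

lemma sat_chain_mem_if_comparable:
  assumes "sat_chain P zs" "hd zs \<le> w" "w \<le> last zs" "w \<in> Pext P"
    "\<forall>z\<in>set zs. z \<le> w \<or> w \<le> z"
  shows "w \<in> set zs"
  using assms
proof (induction zs)
  case (Cons a zs)
  show ?case
  proof (cases "w = a \<or> zs = []")
    case True
    with Cons.prems(2,3) show ?thesis
      by auto
  next
    case False
    then have cover: "covers P a (hd zs)" and chain: "sat_chain P zs"
      using Cons.prems(1) by (auto simp: sat_chain_Cons)
    have "a < w"
      using Cons.prems(2) False by (auto simp: order_less_le)
    then have "hd zs \<le> w"
      using cover Cons.prems(4,5) False by (auto simp: covers_iff order.order_iff_strict)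
    with Cons chain False show ?thesis
      by simp
  qed
qed (simp add: sat_chain_def)

lemma maximal_chain_of_spanning:
  assumes "spanning_chain P zs"
  shows "maximal_chain P {v. Fin v \<in> set zs}"
proof -
  let ?C = "{v. Fin v \<in> set zs}"
  have sorted: "sorted_wrt (<) zs" and set: "set zs \<subseteq> Pext P"
    using assms sat_chain_strict_sorted by (auto simp: spanning_chain_def sat_chain_def)
  have "?C \<subseteq> P"
    using set by auto
  moreover have "u \<le> v \<or> v \<le> u" if "u \<in> ?C" "v \<in> ?C" for u v
    using strict_sorted_comparable[OF sorted, of "Fin u" "Fin v"] that by simp
  ultimately have chain: "is_chain P ?C"
    by (simp add: is_chain_def)
  have "v \<in> ?C" if D: "is_chain P D" "?C \<subseteq> D" "v \<in> D" for D v
  proof -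
    have "z \<le> Fin v \<or> Fin v \<le> z" if "z \<in> set zs" for z
    proof (cases z)
      case (Fin u)
      with that D(2) have "u \<in> D"
        by auto
      with D(1,3) have "u \<le> v \<or> v \<le> u"
        by (simp add: is_chain_def)
      with Fin show ?thesis
        by auto
    qed simp_all
    moreover have "v \<in> P"
      using D by (auto simp: is_chain_def)
    ultimately show ?thesis
      using sat_chain_mem_if_comparable[of P zs "Fin v"] assms
      by (simp add: spanning_chain_def)
  qed
  with chain show ?thesis
    unfolding maximal_chain_def by blast
qed

lemma finite_chain_strict_sorted_list:
  fixes C :: "'a::order set"
  assumes "finite C" "\<forall>a\<in>C. \<forall>b\<in>C. a \<le> b \<or> b \<le> a"
  obtains ls where "set ls = C" "sorted_wrt (<) ls"
  using assms
proof (induction C arbitrary: thesis rule: finite_induct)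
  case empty
  then show ?case by simp
next
  case (insert a C)
  then obtain ls where ls: "set ls = C" "sorted_wrt (<) ls"
    by blast
  have "\<forall>b\<in>C. b < a \<or> a < b"
    using insert by (metis insertCI order.order_iff_strict)
  then have "set (filter (\<lambda>b. b < a) ls @ [a] @ filter (\<lambda>b. a < b) ls) = insert a C"
    using ls by auto
  moreover have "sorted_wrt (<) (filter (\<lambda>b. b < a) ls @ [a] @ filter (\<lambda>b. a < b) ls)"
    using ls(2) by (auto simp: sorted_wrt_append sorted_wrt_filter)
  ultimately show ?case
    using insert.prems(1) by blast
qed

lemma strict_sorted_between:
  fixes zs :: "'a::order list"
  assumes "sorted_wrt (<) zs" "Suc i < length zs" "zs ! i < w" "w < zs ! Suc i" "z \<in> set zs"
  shows "z < w \<or> w < z"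
proof -
  obtain j where j: "j < length zs" "z = zs ! j"
    using assms(5) by (auto simp: in_set_conv_nth)
  show ?thesis
  proof (cases "j \<le> i")
    case True
    then have "z \<le> zs ! i"
      using assms(1,2) j by (cases "j = i") (auto simp: sorted_wrt_iff_nth_less intro: less_imp_le)
    with assms(3) show ?thesis
      using le_less_trans by blast
  next
    case False
    then have "zs ! Suc i \<le> z"
      using assms(1,2) j by (cases "j = Suc i") (auto simp: sorted_wrt_iff_nth_less intro: less_imp_le)
    with assms(4) show ?thesis
      using less_le_trans by blast
  qed
qed

lemma spanning_chain_of_maximal_chain:
  assumes "finite P" "maximal_chain P C"
  obtains zs where "spanning_chain P zs" "{v. Fin v \<in> set zs} = C"
proof -
  have C: "C \<subseteq> P" "\<forall>a\<in>C. \<forall>b\<in>C. a \<le> b \<or> b \<le> a"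
    using assms(2) by (auto simp: maximal_chain_def is_chain_def)
  obtain ls where ls: "set ls = C" "sorted_wrt (<) ls"
    using finite_chain_strict_sorted_list C finite_subset[OF C(1) assms(1)] by metis
  define zs where "zs = NegInf # map Fin ls @ [PosInf]"
  have sorted: "sorted_wrt (<) zs"
    unfolding zs_def using ls(2)
    by (auto simp: sorted_wrt_append sorted_wrt_map elim: sorted_wrt_mono_rel[rotated])
  have set: "set zs \<subseteq> Pext P" and C_eq: "{v. Fin v \<in> set zs} = C"
    unfolding zs_def using ls(1) C(1) by auto
  have "covers P (zs ! i) (zs ! Suc i)" if i: "Suc i < length zs" for i
  proof -
    have "\<not> (zs ! i < w \<and> w < zs ! Suc i)" if w: "w \<in> Pext P" for w
    proof
      assume between: "zs ! i < w \<and> w < zs ! Suc i"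
      then have comparable: "\<forall>z\<in>set zs. z < w \<or> w < z"
        using strict_sorted_between[OF sorted i] by blast
      then have "w \<notin> set zs"
        by blast
      obtain v where v: "w = Fin v" "v \<in> P"
        using w between by (cases w) auto
      have "is_chain P (insert v C)"
        using C v comparable C_eq by (fastforce simp: is_chain_def intro: less_imp_le)
      then have "v \<in> C"
        using assms(2) by (auto simp: maximal_chain_def)
      with \<open>w \<notin> set zs\<close> v C_eq show False
        by blast
    qed
    moreover have "zs ! i < zs ! Suc i"
      using sorted i by (simp add: sorted_wrt_iff_nth_less)
    ultimately show ?thesis
      using set i by (auto simp: covers_iff)
  qed
  then have "spanning_chain P zs"
    using set by (auto simp: spanning_chain_def sat_chain_def successively_conv_nth zs_def)
  with C_eq show thesis
    using that by blast
qed

lemma S_lower_bound: "f \<in> S P m \<Longrightarrow> v \<in> P \<Longrightarrow> m \<le> f (Fin v)"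
  by (simp add: S_def)

lemma S_weight_bound:
  assumes "f \<in> S P m" "spanning_chain P zs"
  shows "weight f zs + m \<le> f NegInf"
proof -
  have "distinct zs"
    using assms(2) sat_chain_distinct by (auto simp: spanning_chain_def)
  then show ?thesis
    using assms maximal_chain_of_spanning[OF assms(2)] sum_Fin_eq_weight[of zs f]
    by (auto simp: S_def)
qed

lemma spanning_chain_join:
  assumes "sat_chain P L1" "hd L1 = NegInf" "sat_chain P (last L1 # ms @ [hd L2])"
    "sat_chain P L2" "last L2 = PosInf"
  shows "spanning_chain P (L1 @ ms @ L2)"
proof -
  have "sat_chain P (L1 @ ms @ [hd L2])"
    using sat_chain_join[OF assms(1,3)] by simp
  then have "sat_chain P ((L1 @ ms @ [hd L2]) @ tl L2)"
    by (rule sat_chain_join[OF _ assms(4)]) simp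
  moreover have "L1 \<noteq> []" "L2 \<noteq> []"
    using assms(1,4) by (auto simp: sat_chain_def)
  ultimately show ?thesis
    using assms(2,5) by (cases L2) (auto simp: spanning_chain_def)
qed

lemma S0_weight_outside_segment:
  assumes "finite P" "f \<in> S P 0" "sat_chain P L1" "hd L1 = NegInf"
    "sat_chain P L2" "last L2 = PosInf" "last L1 < hd L2"
  shows "weight f L1 + weight f L2 \<le> f NegInf"
proof -
  have "last L1 \<in> Pext P" "hd L2 \<in> Pext P"
    using assms(3,5) by (auto simp: sat_chain_def)
  then obtain ms where ms: "sat_chain P (last L1 # ms @ [hd L2])" "set ms \<subseteq> Fin ` P"
    using optimal_segment[OF assms(1) _ _ assms(7)] by metis
  have "0 \<le> weight f ms"
    using weight_lower_bound[OF ms(2), of 0 f] S_lower_bound[OF assms(2)] by simp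
  moreover have "weight f (L1 @ ms @ L2) \<le> f NegInf"
    using S_weight_bound[OF assms(2) spanning_chain_join[OF assms(3,4) ms(1) assms(5,6)]] by simp
  ultimately show ?thesis
    by simp
qed

lemma telescoping_nonpos:
  fixes a b :: "nat \<Rightarrow> int"
  assumes "a 0 = 0" "b t = 0" "\<And>l. l \<le> t \<Longrightarrow> d \<le> a l + b l"
    "\<And>l. l < t \<Longrightarrow> a (Suc l) + b l \<le> d"
  shows "d \<le> 0"
proof -
  have "(\<Sum>l<Suc t. d) \<le> (\<Sum>l<Suc t. a l + b l)"
    using assms(3) by (intro sum_mono) simp
  also have "\<dots> = a 0 + (\<Sum>l<t. a (Suc l)) + ((\<Sum>l<t. b l) + b t)"
    unfolding sum.distrib sum.lessThan_Suc_shift[of a] sum.lessThan_Suc[of b] ..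
  also have "\<dots> = (\<Sum>l<t. a (Suc l) + b l)"
    using assms(1,2) by (simp add: sum.distrib)
  also have "\<dots> \<le> (\<Sum>l<t. d)"
    using assms(4) by (intro sum_mono) simp
  finally show ?thesis
    by (simp add: algebra_simps)
qed

locale reduced_sequence =
  fixes P :: "'a::order set" and eps :: int and t :: nat and x y :: "nat \<Rightarrow> 'a"
  assumes finite_P: "finite P" and condN': "condN' P t x y"
    and reduced: "q_reduced P eps t x y"
begin

abbreviation "X \<equiv> Xs x"
abbreviation "Y \<equiv> Ys t y"
abbreviation "qd \<equiv> qdist P eps"
abbreviation "qs \<equiv> qseq P eps X Y"

definition deg :: int where
  "deg = qs 0 t"

definition before :: "nat \<Rightarrow> int" where
  "before l = qs 0 l - qd (X l) (Y l)"

definition after :: "nat \<Rightarrow> int" where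
  "after m = qs m t - qd (X m) (Y m)"

lemma X_simps [simp]: "X 0 = NegInf" "X (Suc l) = Fin (x (Suc l))"
  by (simp_all add: Xs_def)

lemma Y_simps [simp]: "Y t = PosInf" "m \<noteq> t \<Longrightarrow> Y m = Fin (y m)"
  by (simp_all add: Ys_def)

lemma X_ne_PosInf: "X l \<noteq> PosInf"
  by (cases l) simp_all

lemma Y_ne_NegInf: "Y m \<noteq> NegInf"
  by (cases "m = t") simp_all

lemma X_in_Pext: "l \<le> t \<Longrightarrow> X l \<in> Pext P"
  using condN' by (cases l) (auto simp: condN'_def)

lemma Y_in_Pext: "m \<le> t \<Longrightarrow> Y m \<in> Pext P"
  using condN' by (cases "m = t") (auto simp: condN'_def)

lemma X_less_Y:
  assumes "l \<le> t"
  shows "X l < Y l"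
proof (cases "l = t")
  case True
  then show ?thesis
    using X_ne_PosInf by simp
next
  case False
  then show ?thesis
    using condN' assms by (cases l) (auto simp: condN'_def)
qed

lemma X_Suc_less_Y: "l < t \<Longrightarrow> X (Suc l) < Y l"
  using condN' by (auto simp: condN'_def)

lemma qs_refl: "qs i i = qd (X i) (Y i)"
  by (simp add: qseq_def)

lemma qs_Suc: "i \<le> k \<Longrightarrow> qs i (Suc k) = qs i k + qd (X (Suc k)) (Y (Suc k)) - qd (X (Suc k)) (Y k)"
  by (simp add: qseq_def)

lemma qs_split:
  assumes "i \<le> j" "j \<le> k"
  shows "qs i k = qs i j + qs j k - qd (X j) (Y j)"
  using assms(2)
proof (induction k rule: dec_induct)
  case (step k)
  then show ?case
    using qs_Suc[of i k] qs_Suc[of j k] assms(1) by simp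
qed (simp add: qs_refl)

lemma before_0 [simp]: "before 0 = 0"
  by (simp add: before_def qs_refl)

lemma after_t [simp]: "after t = 0"
  by (simp add: after_def qs_refl)

lemma deg_split: "l \<le> t \<Longrightarrow> deg = before l + qd (X l) (Y l) + after l"
  using qs_split[of 0 l t] by (simp add: deg_def before_def after_def)

lemma deg_split_Suc: "l < t \<Longrightarrow> deg = before (Suc l) + qd (X (Suc l)) (Y l) + after l"
  using qs_Suc[of 0 l] qs_split[of 0 l t] by (simp add: deg_def before_def after_def)

text \<open>The only use of reducedness and of the last clause of condition N'.\<close>
lemma reduced_bound:
  assumes "l \<le> t" "m \<le> t" "X l < Y m"
  shows "before l + qd (X l) (Y m) + after m \<le> deg"
proof -
  consider "l < m" | "l = m" | "l = Suc m" | "Suc (Suc m) \<le> l"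
    by linarith
  then show ?thesis
  proof cases
    case 1
    then have "qd (X l) (Y m) < qs l m"
      using reduced assms by (simp add: q_reduced_def)
    then show ?thesis
      using qs_split[of 0 l m] qs_split[of 0 m t] 1 assms
      by (simp add: deg_def before_def after_def)
  next
    case 2
    then show ?thesis
      using deg_split assms(1) by simp
  next
    case 3
    then show ?thesis
      using deg_split_Suc[of m] assms(1) by simp
  next
    case 4
    then have "x l < y m" "\<not> x l < y m"
      using assms condN' by (cases l; auto simp: condN'_def)+
    then show ?thesis
      by blast
  qed
qed

definition up :: "'a ext \<Rightarrow> int" where
  "up z = Max ((\<lambda>m. after m + qd z (Y m)) ` {m. m \<le> t \<and> z \<le> Y m})"

lemma up_ge: "m \<le> t \<Longrightarrow> z \<le> Y m \<Longrightarrow> after m + qd z (Y m) \<le> up z"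
  unfolding up_def by (rule Max_ge) auto

lemma up_attained: obtains m where "m \<le> t" "z \<le> Y m" "up z = after m + qd z (Y m)"
proof -
  have "t \<in> {m. m \<le> t \<and> z \<le> Y m}"
    by simp
  then have "up z \<in> (\<lambda>m. after m + qd z (Y m)) ` {m. m \<le> t \<and> z \<le> Y m}"
    unfolding up_def by (intro Max_in) auto
  then show thesis
    using that by blast
qed

lemma up_PosInf: "up PosInf = 0"
proof -
  obtain m where "m \<le> t" "PosInf \<le> Y m" "up PosInf = after m + qd PosInf (Y m)"
    by (rule up_attained)
  moreover from this have "m = t"
    by (cases "m = t") (auto simp: order.order_iff_strict)
  ultimately show ?thesis
    using qdist_refl[OF finite_P] by simp
qed

lemma up_cover:
  assumes "covers P z w"
  shows "up w + eps \<le> up z"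
proof -
  obtain m where m: "m \<le> t" "w \<le> Y m" "up w = after m + qd w (Y m)"
    by (rule up_attained)
  have "qd z w + qd w (Y m) \<le> qd z (Y m)"
    using qdist_superadditive[OF finite_P coversD(1,2)[OF assms] Y_in_Pext[OF m(1)]]
      coversD(3)[OF assms] m(2) by simp
  moreover have "z \<le> Y m"
    using coversD(3)[OF assms] m(2) by simp
  ultimately show ?thesis
    using up_ge[OF m(1)] m(3) qdist_cover[OF finite_P assms] by fastforce
qed

lemma up_NegInf_le: "up NegInf \<le> deg"
proof -
  obtain m where "m \<le> t" "up NegInf = after m + qd NegInf (Y m)"
    by (rule up_attained)
  then show ?thesis
    using reduced_bound[of 0 m] Y_ne_NegInf[of m] by simp
qed

definition up_next :: "'a ext \<Rightarrow> int" where
  "up_next z = Max (up ` {w. covers P z w})"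

lemma finite_covers: "finite {w. covers P z w}" "finite {u. covers P u z}"
  by (auto intro: finite_subset[OF _ finite_Pext[OF finite_P]] dest: coversD)

lemma up_next_ge: "covers P z w \<Longrightarrow> up w \<le> up_next z"
  unfolding up_next_def by (rule Max_ge) (auto simp: finite_covers)

lemma up_next_attained:
  assumes "z \<in> Pext P" "z \<noteq> PosInf"
  obtains w where "covers P z w" "up_next z = up w"
proof -
  obtain w where "covers P z w"
    using cover_above[OF finite_P assms(1), of PosInf] assms(2) by auto
  then have "up_next z \<in> up ` {w. covers P z w}"
    unfolding up_next_def by (intro Max_in) (auto simp: finite_covers)
  then show thesis
    using that by blast
qed

definition down :: "'a ext \<Rightarrow> int" where
  "down z = deg - eps - up_next z"

definition down_prev :: "'a ext \<Rightarrow> int" where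
  "down_prev z = Max (down ` {u. covers P u z})"

lemma down_prev_ge: "covers P u z \<Longrightarrow> down u \<le> down_prev z"
  unfolding down_prev_def by (rule Max_ge) (auto simp: finite_covers)

lemma down_prev_attained:
  assumes "z \<in> Pext P" "z \<noteq> NegInf"
  obtains u where "covers P u z" "down_prev z = down u"
proof -
  obtain u where "covers P u z"
    using cover_below[OF finite_P _ assms(1), of NegInf] assms(2) by auto
  then have "down_prev z \<in> down ` {u. covers P u z}"
    unfolding down_prev_def by (intro Max_in) (auto simp: finite_covers)
  then show thesis
    using that by blast
qed

lemma down_NegInf: "down NegInf = 0"
proof (rule antisym)
  have "NegInf < Y 0"
    using Y_ne_NegInf by simp
  then obtain w where w: "covers P NegInf w" "w \<le> Y 0" "qd NegInf (Y 0) = eps + qd w (Y 0)"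
    using qdist_first_cover[OF finite_P Pext_simps(1) Y_in_Pext[of 0]] by blast
  then have "after 0 + qd w (Y 0) \<le> up_next NegInf"
    using up_ge[of 0 w] up_next_ge[OF w(1)] by simp
  then show "down NegInf \<le> 0"
    using deg_split[of 0] w(3) by (simp add: down_def)
next
  obtain w where "covers P NegInf w" "up_next NegInf = up w"
    using up_next_attained[of NegInf] by auto
  then show "0 \<le> down NegInf"
    using up_cover up_NegInf_le by (fastforce simp: down_def)
qed

lemma before_le_down:
  assumes "l \<le> t"
  shows "before l \<le> down (X l)"
proof -
  obtain w where w: "covers P (X l) w" "up_next (X l) = up w"
    using up_next_attained[OF X_in_Pext[OF assms] X_ne_PosInf] by blast
  obtain m where m: "m \<le> t" "w \<le> Y m" "up w = after m + qd w (Y m)"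
    by (rule up_attained)
  have "X l < Y m"
    using coversD(3)[OF w(1)] m(2) by simp
  then have "before l + qd (X l) (Y m) + after m \<le> deg"
    using reduced_bound[OF assms m(1)] by blast
  moreover have "qd (X l) w + qd w (Y m) \<le> qd (X l) (Y m)"
    using qdist_superadditive[OF finite_P X_in_Pext[OF assms] coversD(2)[OF w(1)] Y_in_Pext[OF m(1)]]
      coversD(3)[OF w(1)] m(2) by simp
  ultimately show ?thesis
    using w(2) m(3) qdist_cover[OF finite_P w(1)] by (simp add: down_def)
qed

definition xi :: "'a ext \<Rightarrow> int" where
  "xi z = (case z of NegInf \<Rightarrow> deg | PosInf \<Rightarrow> 0
     | Fin v \<Rightarrow> if v \<in> P then max (up z - up_next z) (down z - down_prev z) else 0)"

lemma xi_NegInf [simp]: "xi NegInf = deg"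
  by (simp add: xi_def)

lemma xi_Fin:
  "v \<in> P \<Longrightarrow> xi (Fin v) = max (up (Fin v) - up_next (Fin v)) (down (Fin v) - down_prev (Fin v))"
  by (simp add: xi_def)

lemma eps_le_xi:
  assumes "v \<in> P"
  shows "eps \<le> xi (Fin v)"
proof -
  obtain w where "covers P (Fin v) w" "up_next (Fin v) = up w"
    using up_next_attained[of "Fin v"] assms by auto
  then show ?thesis
    using up_cover xi_Fin[OF assms] by fastforce
qed

lemma down_cover_le:
  assumes "covers P u (Fin v)"
  shows "down u + xi (Fin v) \<le> down (Fin v)"
proof -
  have v: "v \<in> P"
    using coversD(2)[OF assms] by simp
  show ?thesis
  proof (cases "down (Fin v) - down_prev (Fin v) \<le> up (Fin v) - up_next (Fin v)")
    case True
    then show ?thesis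
      using up_next_ge[OF assms] xi_Fin[OF v] by (simp add: down_def)
  next
    case False
    then show ?thesis
      using down_prev_ge[OF assms] xi_Fin[OF v] by simp
  qed
qed

lemma weight_le_down:
  "sat_chain P (NegInf # zs) \<Longrightarrow> PosInf \<notin> set zs \<Longrightarrow> weight xi zs \<le> down (last (NegInf # zs))"
proof (induction zs rule: rev_induct)
  case Nil
  then show ?case
    using down_NegInf by simp
next
  case (snoc z zs)
  then have cover: "covers P (last (NegInf # zs)) z" and chain: "sat_chain P (NegInf # zs)"
    using sat_chain_snoc[of P "NegInf # zs" z] by auto
  moreover obtain v where "z = Fin v"
    using coversD(3)[OF cover] snoc.prems(2) by (cases z) auto
  ultimately show ?case
    using snoc.IH snoc.prems(2) down_cover_le[of "last (NegInf # zs)" v] by simp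
qed

lemma xi_weight_spanning:
  assumes "spanning_chain P zs"
  shows "weight xi zs + eps \<le> deg"
proof -
  obtain rs where zs: "zs = NegInf # rs @ [PosInf]"
    using assms by (cases zs; cases "tl zs" rule: rev_cases) (auto simp: spanning_chain_def sat_chain_def)
  let ?u = "last (NegInf # rs)"
  have "sat_chain P ((NegInf # rs) @ [PosInf])"
    using assms zs by (simp add: spanning_chain_def)
  then have chain: "sat_chain P (NegInf # rs)" and cover: "covers P ?u PosInf"
    unfolding sat_chain_snoc by auto
  have "PosInf \<notin> set rs"
    using sat_chain_distinct[of P zs] assms zs by (auto simp: spanning_chain_def)
  then have "weight xi rs \<le> down ?u"
    using weight_le_down[OF chain] by blast
  moreover obtain w where w: "covers P ?u w" "up_next ?u = up w"
    using up_next_attained[of ?u] coversD[OF cover] by auto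
  have "w = PosInf"
    using cover coversD[OF w(1)] by (auto simp: covers_iff)
  ultimately show ?thesis
    using w(2) up_PosInf zs by (simp add: down_def)
qed

lemma xi_in_S: "xi \<in> S P eps"
  unfolding S_def
proof (intro CollectI conjI allI impI ballI)
  fix a assume "a \<notin> Pminus P"
  then show "xi a = 0"
    by (cases a) (auto simp: Pminus_def xi_def)
next
  fix v assume "v \<in> P"
  then show "eps \<le> xi (Fin v)"
    by (rule eps_le_xi)
next
  fix C assume "maximal_chain P C"
  then obtain zs where zs: "spanning_chain P zs" "{v. Fin v \<in> set zs} = C"
    using spanning_chain_of_maximal_chain[OF finite_P] by blast
  then have "(\<Sum>v\<in>C. xi (Fin v)) = weight xi zs"
    using sum_Fin_eq_weight sat_chain_distinct by (fastforce simp: spanning_chain_def)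
  then show "(\<Sum>v\<in>C. xi (Fin v)) + eps \<le> xi NegInf"
    using xi_weight_spanning[OF zs(1)] by simp
qed

lemma suffix_chain:
  "z \<in> Pext P \<Longrightarrow> z \<noteq> NegInf \<Longrightarrow>
    \<exists>L. sat_chain P L \<and> hd L = z \<and> last L = PosInf \<and> up z \<le> weight xi L"
  using finite_P
proof (induction z rule: Pext_up_induct)
  case (step z)
  show ?case
  proof (cases z)
    case PosInf
    then show ?thesis
      using up_PosInf by (intro exI[of _ "[PosInf]"]) (simp add: sat_chain_def)
  next
    case (Fin v)
    obtain w where w: "covers P z w" "up_next z = up w"
      using up_next_attained[OF step.prems(1)] Fin by auto
    then obtain L where L: "sat_chain P L" "hd L = w" "last L = PosInf" "up w \<le> weight xi L"
      using step.IH coversD[OF w(1)] by fastforce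
    then have "sat_chain P (z # L)"
      using w(1) step.prems(1) by (simp add: sat_chain_Cons)
    moreover have "up z - up_next z \<le> xi z"
      using step.prems(1) Fin xi_Fin by simp
    ultimately show ?thesis
      using L w(2) Fin by (intro exI[of _ "z # L"]) (simp add: sat_chain_def)
  qed (use step.prems in simp)
qed

lemma prefix_chain:
  "z \<in> Pext P \<Longrightarrow> z \<noteq> PosInf \<Longrightarrow>
    \<exists>L. sat_chain P L \<and> hd L = NegInf \<and> last L = z \<and> down z \<le> weight xi L"
  using finite_P
proof (induction z rule: Pext_down_induct)
  case (step z)
  show ?case
  proof (cases z)
    case NegInf
    then show ?thesis
      using down_NegInf by (intro exI[of _ "[NegInf]"]) (simp add: sat_chain_def)
  next
    case (Fin v)
    obtain u where u: "covers P u z" "down_prev z = down u"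
      using down_prev_attained[OF step.prems(1)] Fin by auto
    then obtain L where L: "sat_chain P L" "hd L = NegInf" "last L = u" "down u \<le> weight xi L"
      using step.IH coversD[OF u(1)] by fastforce
    have "L \<noteq> []"
      using L(1) by (simp add: sat_chain_def)
    with L u(1) step.prems(1) have "sat_chain P (L @ [z])"
      by (simp add: sat_chain_snoc)
    moreover have "down z - down_prev z \<le> xi z"
      using step.prems(1) Fin xi_Fin by simp
    ultimately show ?thesis
      using L u(2) Fin by (intro exI[of _ "L @ [z]"]) (simp add: sat_chain_def)
  qed (use step.prems in simp)
qed

lemma weight_through_segment:
  assumes "f1 \<in> S P 0" "f2 \<in> S P eps" "xi = (\<lambda>a. f1 a + f2 a)" "l \<le> t"
    and L1: "sat_chain P L1" "hd L1 = NegInf" "last L1 = X l" "before l \<le> weight xi L1"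
    and L2: "sat_chain P L2" "hd L2 = Y l" "last L2 = PosInf" "after l \<le> weight xi L2"
  shows "f1 NegInf \<le> weight f1 L1 + weight f1 L2"
proof -
  obtain ms where ms: "sat_chain P (X l # ms @ [Y l])" "set ms \<subseteq> Fin ` P"
    "qd (X l) (Y l) = eps * int (length ms) + eps"
    using optimal_segment[OF finite_P X_in_Pext Y_in_Pext X_less_Y] assms(4) by metis
  have "spanning_chain P (L1 @ ms @ L2)"
    using spanning_chain_join[OF L1(1,2) _ L2(1,3)] ms(1) L1(3) L2(2) by simp
  then have "weight f2 (L1 @ ms @ L2) + eps \<le> f2 NegInf"
    using S_weight_bound[OF assms(2)] by blast
  moreover have "eps * int (length ms) \<le> weight f2 ms"
    using weight_lower_bound[OF ms(2)] S_lower_bound[OF assms(2)] by blast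
  moreover have "deg \<le> weight xi L1 + eps * int (length ms) + eps + weight xi L2"
    using deg_split[OF assms(4)] ms(3) L1(4) L2(4) by simp
  moreover have "f1 NegInf + f2 NegInf = deg"
    using fun_cong[OF assms(3), of NegInf] by simp
  moreover have "weight xi L = weight f1 L + weight f2 L" for L
    by (simp add: assms(3) weight_add)
  ultimately show ?thesis
    by simp
qed

lemma before_le_weight_prefix:
  assumes "l \<le> t"
  shows "\<exists>L. sat_chain P L \<and> hd L = NegInf \<and> last L = X l \<and> before l \<le> weight xi L"
  using prefix_chain[OF X_in_Pext[OF assms] X_ne_PosInf] before_le_down[OF assms]
  by (meson order.trans)

lemma after_le_weight_suffix:
  assumes "m \<le> t"
  shows "\<exists>L. sat_chain P L \<and> hd L = Y m \<and> last L = PosInf \<and> after m \<le> weight xi L"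
proof -
  have "after m \<le> up (Y m)"
    using up_ge[OF assms, of "Y m"] qdist_refl[OF finite_P Y_in_Pext[OF assms]] by simp
  then show ?thesis
    using suffix_chain[OF Y_in_Pext[OF assms] Y_ne_NegInf] by (meson order.trans)
qed

lemma xi_generator: "is_generator P eps xi"
proof -
  obtain pre where pre: "\<And>l. l \<le> t \<Longrightarrow>
      sat_chain P (pre l) \<and> hd (pre l) = NegInf \<and> last (pre l) = X l \<and> before l \<le> weight xi (pre l)"
    using before_le_weight_prefix by metis
  obtain suf where suf: "\<And>m. m \<le> t \<Longrightarrow>
      sat_chain P (suf m) \<and> hd (suf m) = Y m \<and> last (suf m) = PosInf \<and> after m \<le> weight xi (suf m)"
    using after_le_weight_suffix by metis
  have "f1 NegInf \<le> 0" if f: "f1 \<in> S P 0" "f2 \<in> S P eps" "xi = (\<lambda>a. f1 a + f2 a)" for f1 f2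
  proof (rule telescoping_nonpos)
    show "weight f1 (pre 0) = 0" "weight f1 (suf t) = 0"
      using sat_chain_singleton[of P "pre 0"] sat_chain_singleton[of P "suf t"] pre[of 0] suf[of t]
      by simp_all
    show "f1 NegInf \<le> weight f1 (pre l) + weight f1 (suf l)" if "l \<le> t" for l
      using weight_through_segment[OF f that] pre[OF that] suf[OF that] by blast
    show "weight f1 (pre (Suc l)) + weight f1 (suf l) \<le> f1 NegInf" if "l < t" for l
      using S0_weight_outside_segment[OF finite_P f(1)] pre[of "Suc l"] suf[of l] that
        X_Suc_less_Y[OF that] by simp
  qed
  then show ?thesis
    unfolding is_generator_def using xi_in_S by (meson not_le)
qed

end

theorem mainTheorem10:
  fixes P :: "'a::order set" and eps :: int and t :: nat and x y :: "nat \<Rightarrow> 'a"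
  assumes "finite P"
    and "eps \<in> {1, -1}"
    and "condN' P t x y"
    and "q_reduced P eps t x y"
  shows "\<exists>\<xi>. \<xi> \<in> S P eps \<and> is_generator P eps \<xi> \<and>
           \<xi> NegInf = qseq P eps (Xs x) (Ys t y) 0 t"
proof -
  interpret reduced_sequence P eps t x y
    using assms(1,3,4) by unfold_locales
  show ?thesis
    using xi_in_S xi_generator by (intro exI[of _ xi]) (simp add: deg_def)
qed

end
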